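(* Let $\mathcal{P}\subset\mathbb{R}^d$ be a polytope (cage) with $K$ vertices $v_1,\dots,v_K$, and let $\alpha=(\alpha_1,\dots,\alpha_K)^\top:\mathcal{P}\to\mathbb{R}^K$ be any valid generalized barycentric coordinate function for $\mathcal{P}$. Then for every $x\in\mathcal{P}$, the vector $\alpha(x)$ is a convex combination of simplex barycentric coordinate vectors $\alpha(x;\mathcal{P},T)$, where $T$ ranges over the simplices whose vertices are cage vertices of $\mathcal{P}$; that is, there exist weights $w_T(x)\ge 0$ with $\sum_T w_T(x)=1$ such that $\alpha(x)=\sum_T w_T(x)\,\alpha(x;\mathcal{P},T)$.
   Context: A function $\alpha:\mathcal{P}\to\mathbb{R}^K$ is a valid generalized barycentric coordinate function for $\mathcal{P}$ if for all $x\in\mathcal{P}$: (non-negativity) $\alpha_i(x)\ge 0$ for all $i$; (partition of unity) $\sum_i\alpha_i(x)=1$; (reproduction) $\sum_i \alpha_i(x)\,v_i = x$; and (Lagrange property) $\alpha_i(v_j)=\delta_{ij}$ for all $i,j$. For a non-degenerate (nonzero volume) simplex $T$ in $\mathbb{R}^d$ with vertex set $\{v_{l_0},\dots,v_{l_d}\}\subseteq\{v_1,\dots,v_K\}$ containing $x$, the simplex barycentric coordinates $\alpha(x;T)\in\mathbb{R}^{d+1}$ are the unique solution $\lambda$ of $\sum_{k}\lambda_k v_{l_k}=x$, $\sum_k\lambda_k=1$; the cage coordinates due to $T$, $\alpha(x;\mathcal{P},T)\in\mathbb{R}^K$, have entry $i$ equal to the simplex coordinate of $x$ associated with $v_i$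 if $v_i$ is a vertex of $T$, and $0$ otherwise. *)

theory Defs
  imports "HOL-Analysis.Analysis"
begin

text \<open>The cage: vertices v 0, ..., v (K-1) in real^'n (indices shifted by one w.r.t. the paper).\<close>

definition is_cage :: "nat \<Rightarrow> (nat \<Rightarrow> real^'n) \<Rightarrow> (real^'n) set \<Rightarrow> bool" where
  "is_cage K v P \<longleftrightarrow>
     P = convex hull (v ` {..<K}) \<and>
     inj_on v {..<K} \<and>
     (\<forall>i<K. v i extreme_point_of P) \<and>
     aff_dim P = int CARD('n)"

definition valid_gbc :: "nat \<Rightarrow> (nat \<Rightarrow> real^'n) \<Rightarrow> (real^'n) set \<Rightarrow> (real^'n \<Rightarrow> nat \<Rightarrow> real) \<Rightarrow> bool" where
  "valid_gbc K v P alpha \<longleftrightarrow>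
     (\<forall>x\<in>P.
        (\<forall>i<K. alpha x i \<ge> 0) \<and>
        (\<Sum>i<K. alpha x i) = 1 \<and>
        (\<Sum>i<K. alpha x i *\<^sub>R v i) = x) \<and>
     (\<forall>i<K. \<forall>j<K. alpha (v j) i = (if i = j then 1 else 0))"

definition cage_simplex :: "nat \<Rightarrow> (nat \<Rightarrow> real^'n) \<Rightarrow> nat set \<Rightarrow> bool" where
  "cage_simplex K v T \<longleftrightarrow>
     T \<subseteq> {..<K} \<and> card T = CARD('n) + 1 \<and> inj_on v T \<and>
     \<not> affine_dependent (v ` T)"

definition simplices_containing :: "nat \<Rightarrow> (nat \<Rightarrow> real^'n) \<Rightarrow> real^'n \<Rightarrow> nat set set" where
  "simplices_containing K v x =
     {T. cage_simplex K v T \<and> x \<in> convex hull (v ` T)}"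

text \<open>Simplex barycentric coordinates of x w.r.t. T (the unique solution lambda, supported on T),
  extended by zero to all cage indices: the cage coordinates alpha(x; P, T).\<close>

definition cage_coords :: "(nat \<Rightarrow> real^'n) \<Rightarrow> nat set \<Rightarrow> real^'n \<Rightarrow> nat \<Rightarrow> real" where
  "cage_coords v T x =
     (THE l. (\<forall>j. j \<notin> T \<longrightarrow> l j = 0) \<and> (\<Sum>j\<in>T. l j) = 1 \<and> (\<Sum>j\<in>T. l j *\<^sub>R v j) = x)"

end

theory Submission
  imports Defs
begin

text \<open>Every nonnegative weight vector \<open>l\<close> on the cage vertices that reproduces \<open>x\<close> (in particular
  \<open>\<alpha>(x)\<close>) is a convex combination of cage coordinates; we induct on the size of the support of \<open>l\<close>.
  If the supporting vertices are affinely independent, they extend to a full-dimensional simplex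
  \<open>T\<close> of cage vertices, and by uniqueness of simplex coordinates \<open>l = \<alpha>(x; P, T)\<close>.  Otherwise an
  affine dependence \<open>\<mu>\<close> among them yields weight vectors \<open>l - t\<^sub>1 \<mu>\<close> and \<open>l + t\<^sub>2 \<mu>\<close> with
  strictly smaller support, and \<open>l\<close> lies on the segment between them.\<close>

lemma affine_dependent_image_explicit:
  fixes v :: "'i \<Rightarrow> 'a::real_vector"
  assumes fin: "finite T" and inj: "inj_on v T"
  shows "affine_dependent (v ` T) \<longleftrightarrow>
    (\<exists>mu. sum mu T = 0 \<and> (\<exists>j\<in>T. mu j \<noteq> 0) \<and> (\<Sum>j\<in>T. mu j *\<^sub>R v j) = 0)"
proof -
  have reindex: "sum U (v ` T) = sum (U \<circ> v) T" "(\<Sum>y\<in>v ` T. U y *\<^sub>R y) = (\<Sum>j\<in>T. U (v j) *\<^sub>R v j)"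
    for U :: "'a \<Rightarrow> real"
    using sum.reindex[OF inj, of U] sum.reindex[OF inj, of "\<lambda>y. U y *\<^sub>R y"] by simp_all
  show ?thesis
  proof
    assume "affine_dependent (v ` T)"
    then obtain U where "sum U (v ` T) = 0" "\<exists>y\<in>v ` T. U y \<noteq> 0" "(\<Sum>y\<in>v ` T. U y *\<^sub>R y) = 0"
      using affine_dependent_explicit_finite[OF finite_imageI[OF fin]] by blast
    then show "\<exists>mu. sum mu T = 0 \<and> (\<exists>j\<in>T. mu j \<noteq> 0) \<and> (\<Sum>j\<in>T. mu j *\<^sub>R v j) = 0"
      by (intro exI[of _ "U \<circ> v"]) (auto simp: reindex)
  next
    assume "\<exists>mu. sum mu T = 0 \<and> (\<exists>j\<in>T. mu j \<noteq> 0) \<and> (\<Sum>j\<in>T. mu j *\<^sub>R v j) = 0"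
    then obtain mu where mu: "sum mu T = 0" "\<exists>j\<in>T. mu j \<noteq> 0" "(\<Sum>j\<in>T. mu j *\<^sub>R v j) = 0"
      by blast
    define U where "U = mu \<circ> inv_into T v"
    have U: "U (v j) = mu j" if "j \<in> T" for j
      using inj that by (simp add: U_def)
    have "sum U (v ` T) = 0" "(\<Sum>y\<in>v ` T. U y *\<^sub>R y) = 0" "\<exists>y\<in>v ` T. U y \<noteq> 0"
      using mu U by (simp_all add: reindex cong: sum.cong)
    then show "affine_dependent (v ` T)"
      using affine_dependent_explicit_finite[OF finite_imageI[OF fin]] by blast
  qed
qed

lemma sum_eq_0_imp_exists_pos:
  fixes mu :: "'a \<Rightarrow> real"
  assumes fin: "finite U" and sum0: "sum mu U = 0" and j: "j \<in> U" "mu j \<noteq> 0"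
  shows "\<exists>i\<in>U. 0 < mu i"
proof (rule ccontr)
  assume "\<not> (\<exists>i\<in>U. 0 < mu i)"
  then have "\<forall>i\<in>U. 0 \<le> - mu i"
    by (simp add: not_less)
  moreover have "sum (\<lambda>i. - mu i) U = 0"
    using sum0 by (simp add: sum_negf)
  ultimately have "- mu j = 0"
    using sum_nonneg_eq_0_iff[OF fin, of "\<lambda>i. - mu i"] j(1) by simp
  with j(2) show False
    by simp
qed

lemma affine_dependence_with_both_signs:
  fixes v :: "nat \<Rightarrow> 'a::real_vector"
  assumes inj: "inj_on v {..<K}" and U: "U \<subseteq> {..<K}" and dep: "affine_dependent (v ` U)"
  obtains m where "{i. m i \<noteq> 0} \<subseteq> U" "sum m {..<K} = 0" "(\<Sum>i<K. m i *\<^sub>R v i) = 0"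
    "\<exists>i. 0 < m i" "\<exists>i. m i < 0"
proof -
  have finU: "finite U"
    using U finite_subset by blast
  obtain mu j where mu: "sum mu U = 0" "(\<Sum>j\<in>U. mu j *\<^sub>R v j) = 0" and j: "j \<in> U" "mu j \<noteq> 0"
    using dep affine_dependent_image_explicit[OF finU inj_on_subset[OF inj U]] by blast
  define m where "m i = (if i \<in> U then mu i else 0)" for i
  have "sum m {..<K} = 0" "(\<Sum>i<K. m i *\<^sub>R v i) = 0"
    using mu U by (simp_all add: m_def if_distrib if_distribR sum.If_cases Int_absorb1)
  moreover obtain i1 where "i1 \<in> U" "0 < mu i1"
    using sum_eq_0_imp_exists_pos[OF finU mu(1) j] by blast
  moreover obtain i2 where "i2 \<in> U" "0 < - mu i2"
    using sum_eq_0_imp_exists_pos[OF finU _ j(1), of "\<lambda>i. - mu i"] mu(1) j(2)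
    by (auto simp: sum_negf)
  moreover have "{i. m i \<noteq> 0} \<subseteq> U"
    by (auto simp: m_def)
  ultimately show thesis
    by (intro that[of m] exI[of _ i1] exI[of _ i2]) (simp_all add: m_def)
qed

lemma ratio_test_step:
  fixes l mu :: "'a \<Rightarrow> real"
  assumes fin: "finite U" and pos: "\<forall>i\<in>U. 0 < l i" and j: "j \<in> U" "0 < mu j"
  obtains t k where "0 < t" "\<forall>i\<in>U. 0 \<le> l i - t * mu i" "k \<in> U" "l k - t * mu k = 0"
proof -
  define R where "R = (\<lambda>i. l i / mu i) ` {i\<in>U. 0 < mu i}"
  have finR: "finite R" and neR: "R \<noteq> {}"
    using fin j by (auto simp: R_def)
  define t where "t = Min R"
  have "t \<in> R"
    using finR neR by (simp add: t_def)
  then obtain k where k: "k \<in> U" "0 < mu k" "t = l k / mu k"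
    by (auto simp: R_def)
  have t: "0 < t"
    using k pos by simp
  have "0 \<le> l i - t * mu i" if i: "i \<in> U" for i
  proof (cases "0 < mu i")
    case True
    then have "t \<le> l i / mu i"
      using finR i by (auto simp: t_def R_def)
    with True show ?thesis
      by (simp add: field_simps)
  next
    case False
    then have "t * mu i \<le> 0"
      using t by (simp add: mult_nonneg_nonpos)
    moreover have "0 < l i"
      using pos i by blast
    ultimately show ?thesis
      by linarith
  qed
  then show thesis
    using that t k by simp
qed

lemma cage_coords_eqI:
  fixes v :: "nat \<Rightarrow> real^'n"
  assumes fin: "finite T" and inj: "inj_on v T" and indep: "\<not> affine_dependent (v ` T)"
    and supp: "\<And>j. j \<notin> T \<Longrightarrow> l j = 0"
    and sum1: "sum l T = 1" and reproduce: "(\<Sum>j\<in>T. l j *\<^sub>R v j) = x"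
  shows "cage_coords v T x = l"
  unfolding cage_coords_def
proof (rule the_equality)
  show "(\<forall>j. j \<notin> T \<longrightarrow> l j = 0) \<and> sum l T = 1 \<and> (\<Sum>j\<in>T. l j *\<^sub>R v j) = x"
    using assms by auto
next
  fix l' assume l': "(\<forall>j. j \<notin> T \<longrightarrow> l' j = 0) \<and> sum l' T = 1 \<and> (\<Sum>j\<in>T. l' j *\<^sub>R v j) = x"
  have "sum (\<lambda>j. l' j - l j) T = 0" "(\<Sum>j\<in>T. (l' j - l j) *\<^sub>R v j) = 0"
    using l' sum1 reproduce by (simp_all add: sum_subtractf scaleR_diff_left)
  then have "\<forall>j\<in>T. l' j - l j = 0"
    using indep affine_dependent_image_explicit[OF fin inj] by blast
  then show "l' = l"
    using l' supp by (metis eq_iff_diff_eq_0 ext)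
qed

lemma extend_to_cage_simplex:
  fixes v :: "nat \<Rightarrow> real^'n"
  assumes inj: "inj_on v {..<K}" and dim: "aff_dim (v ` {..<K}) = int CARD('n)"
    and U: "U \<subseteq> {..<K}" and indep: "\<not> affine_dependent (v ` U)"
  obtains T where "cage_simplex K v T" "U \<subseteq> T"
proof -
  obtain B where B: "\<not> affine_dependent B" "v ` U \<subseteq> B" "B \<subseteq> v ` {..<K}"
      "affine hull B = affine hull (v ` {..<K})"
    using extend_to_affine_basis[OF indep, of "v ` {..<K}"] U by blast
  define T where "T = {i. i < K \<and> v i \<in> B}"
  have TK: "T \<subseteq> {..<K}" and vT: "v ` T = B" and UT: "U \<subseteq> T"
    using B(2,3) U by (auto simp: T_def)
  have injT: "inj_on v T"
    using inj TK inj_on_subset by blast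
  have "int (card T) = aff_dim B + 1"
    using aff_dim_affine_independent[OF B(1)] card_image[OF injT] vT by simp
  also have "aff_dim B = int CARD('n)"
    using aff_dim_affine_hull2[OF B(4)] dim by simp
  finally have "card T = CARD('n) + 1"
    by linarith
  then show thesis
    using that TK injT vT B(1) UT by (auto simp: cage_simplex_def)
qed

definition barycentric_weights :: "nat \<Rightarrow> (nat \<Rightarrow> real^'n) \<Rightarrow> real^'n \<Rightarrow> (nat \<Rightarrow> real) \<Rightarrow> bool" where
  "barycentric_weights K v x l \<longleftrightarrow> (\<forall>i. K \<le> i \<longrightarrow> l i = 0) \<and> (\<forall>i<K. 0 \<le> l i) \<and>
     sum l {..<K} = 1 \<and> (\<Sum>i<K. l i *\<^sub>R v i) = x"

definition simplex_mixture :: "nat \<Rightarrow> (nat \<Rightarrow> real^'n) \<Rightarrow> real^'n \<Rightarrow> (nat \<Rightarrow> real) \<Rightarrow> bool" where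
  "simplex_mixture K v x l \<longleftrightarrow> (\<exists>w. (\<forall>T\<in>simplices_containing K v x. w T \<ge> 0) \<and>
     (\<Sum>T\<in>simplices_containing K v x. w T) = 1 \<and>
     (\<forall>i<K. l i = (\<Sum>T\<in>simplices_containing K v x. w T * cage_coords v T x i)))"

lemma finite_simplices_containing: "finite (simplices_containing K v x)"
  by (rule finite_subset[of _ "Pow {..<K}"]) (auto simp: simplices_containing_def cage_simplex_def)

lemma simplex_mixture_convex:
  assumes l1: "simplex_mixture K v x l1" and l2: "simplex_mixture K v x l2"
    and a: "0 \<le> a" "a \<le> 1"
  shows "simplex_mixture K v x (\<lambda>i. a * l1 i + (1 - a) * l2 i)"
proof -
  let ?S = "simplices_containing K v x"
  obtain w1 where w1: "\<forall>T\<in>?S. w1 T \<ge> 0" "sum w1 ?S = 1"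
    "\<forall>i<K. l1 i = (\<Sum>T\<in>?S. w1 T * cage_coords v T x i)"
    using l1 unfolding simplex_mixture_def by blast
  obtain w2 where w2: "\<forall>T\<in>?S. w2 T \<ge> 0" "sum w2 ?S = 1"
    "\<forall>i<K. l2 i = (\<Sum>T\<in>?S. w2 T * cage_coords v T x i)"
    using l2 unfolding simplex_mixture_def by blast
  show ?thesis
    unfolding simplex_mixture_def
  proof (intro exI[of _ "\<lambda>T. a * w1 T + (1 - a) * w2 T"] conjI ballI allI impI)
    fix T assume "T \<in> ?S"
    then show "0 \<le> a * w1 T + (1 - a) * w2 T"
      using w1 w2 a by simp
  next
    show "(\<Sum>T\<in>?S. a * w1 T + (1 - a) * w2 T) = 1"
      using w1 w2 by (simp add: sum.distrib flip: sum_distrib_left)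
  next
    fix i assume "i < K"
    then show "a * l1 i + (1 - a) * l2 i = (\<Sum>T\<in>?S. (a * w1 T + (1 - a) * w2 T) * cage_coords v T x i)"
      using w1 w2 by (simp add: distrib_right mult.assoc sum.distrib flip: sum_distrib_left)
  qed
qed

lemma simplex_mixture_cage_coords:
  assumes T: "T \<in> simplices_containing K v x"
  shows "simplex_mixture K v x (cage_coords v T x)"
  unfolding simplex_mixture_def
proof (intro exI[of _ "\<lambda>T'. if T' = T then 1 else 0"] conjI ballI allI impI)
  show "(\<Sum>T'\<in>simplices_containing K v x. if T' = T then 1 else 0) = (1::real)"
    using T by (simp add: sum.delta[OF finite_simplices_containing])
  fix i
  show "cage_coords v T x i =
      (\<Sum>T'\<in>simplices_containing K v x. (if T' = T then 1 else 0) * cage_coords v T' x i)"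
    using T by (simp add: if_distrib if_distribR sum.delta[OF finite_simplices_containing] cong: if_cong)
qed simp

lemma barycentric_weights_support:
  assumes "barycentric_weights K v x l"
  shows "{i. l i \<noteq> 0} \<subseteq> {..<K}"
  using assms by (auto simp: barycentric_weights_def not_less[symmetric])

lemma simplex_mixture_if_affine_independent:
  fixes v :: "nat \<Rightarrow> real^'n"
  assumes inj: "inj_on v {..<K}" and dim: "aff_dim (v ` {..<K}) = int CARD('n)"
    and l: "barycentric_weights K v x l" and indep: "\<not> affine_dependent (v ` {i. l i \<noteq> 0})"
  shows "simplex_mixture K v x l"
proof -
  obtain T where T: "cage_simplex K v T" and supp: "{i. l i \<noteq> 0} \<subseteq> T"
    using extend_to_cage_simplex[OF inj dim barycentric_weights_support[OF l] indep] by blast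
  have TK: "T \<subseteq> {..<K}" and injT: "inj_on v T" and indepT: "\<not> affine_dependent (v ` T)"
    using T by (auto simp: cage_simplex_def)
  have finT: "finite T"
    using TK finite_subset by blast
  have zero: "l j = 0" if "j \<notin> T" for j
    using supp that by auto
  have "sum l T = sum l {..<K}" "(\<Sum>j\<in>T. l j *\<^sub>R v j) = (\<Sum>j<K. l j *\<^sub>R v j)"
    by (intro sum.mono_neutral_left; use TK zero in auto)+
  then have sum1: "sum l T = 1" and reproduce: "(\<Sum>j\<in>T. l j *\<^sub>R v j) = x"
    using l by (auto simp: barycentric_weights_def)
  have "x \<in> convex hull (v ` T)"
    unfolding reproduce[symmetric]
    using l TK finT sum1 by (intro convex_sum) (auto simp: barycentric_weights_def intro: hull_inc)
  then have "T \<in> simplices_containing K v x"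
    using T by (simp add: simplices_containing_def)
  moreover have "cage_coords v T x = l"
    using finT injT indepT zero sum1 reproduce by (rule cage_coords_eqI)
  ultimately show ?thesis
    using simplex_mixture_cage_coords by metis
qed

lemma barycentric_weights_shift:
  assumes l: "barycentric_weights K v x l"
    and m: "{i. m i \<noteq> 0} \<subseteq> {i. l i \<noteq> 0}" "sum m {..<K} = 0" "(\<Sum>i<K. m i *\<^sub>R v i) = 0"
    and nonneg: "\<forall>i. l i \<noteq> 0 \<longrightarrow> 0 \<le> l i + c * m i" and k: "l k \<noteq> 0" "l k + c * m k = 0"
  shows "barycentric_weights K v x (\<lambda>i. l i + c * m i)" "{i. l i + c * m i \<noteq> 0} \<subset> {i. l i \<noteq> 0}"
proof -
  have m_zero: "m i = 0" if "l i = 0" for i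
    using m(1) that by blast
  have "\<forall>i. K \<le> i \<longrightarrow> m i = 0"
    using l m_zero by (simp add: barycentric_weights_def)
  moreover have "\<forall>i<K. 0 \<le> l i + c * m i"
    using nonneg m_zero by (metis add_0 mult_zero_right order_refl)
  moreover have "(\<Sum>i<K. (l i + c * m i) *\<^sub>R v i) = (\<Sum>i<K. l i *\<^sub>R v i) + c *\<^sub>R (\<Sum>i<K. m i *\<^sub>R v i)"
    by (simp add: scaleR_add_left sum.distrib scaleR_sum_right)
  ultimately show "barycentric_weights K v x (\<lambda>i. l i + c * m i)"
    using l m by (simp add: barycentric_weights_def sum.distrib flip: sum_distrib_left)
  show "{i. l i + c * m i \<noteq> 0} \<subset> {i. l i \<noteq> 0}"
    using k m_zero by auto
qed

lemma barycentric_weights_split: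
  fixes v :: "nat \<Rightarrow> real^'n"
  assumes inj: "inj_on v {..<K}" and l: "barycentric_weights K v x l"
    and dep: "affine_dependent (v ` {i. l i \<noteq> 0})"
  obtains l1 l2 a where "barycentric_weights K v x l1" "{i. l1 i \<noteq> 0} \<subset> {i. l i \<noteq> 0}"
    "barycentric_weights K v x l2" "{i. l2 i \<noteq> 0} \<subset> {i. l i \<noteq> 0}"
    "0 \<le> a" "a \<le> 1" "l = (\<lambda>i. a * l1 i + (1 - a) * l2 i)"
proof -
  define U where "U = {i. l i \<noteq> 0}"
  have UK: "U \<subseteq> {..<K}"
    using barycentric_weights_support[OF l] by (simp add: U_def)
  have finU: "finite U"
    using UK finite_subset by blast
  have lpos: "\<forall>i\<in>U. 0 < l i"
    using l UK by (force simp: U_def barycentric_weights_def)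
  obtain m where m: "{i. m i \<noteq> 0} \<subseteq> U" "sum m {..<K} = 0" "(\<Sum>i<K. m i *\<^sub>R v i) = 0"
    and pos: "\<exists>i. 0 < m i" and neg: "\<exists>i. m i < 0"
    using affine_dependence_with_both_signs[OF inj UK dep[folded U_def]] by blast
  obtain j1 j2 where j: "0 < m j1" "0 < - m j2"
    using pos neg by auto
  have m_zero: "m i = 0" if "i \<notin> U" for i
    using m(1) that by blast
  have "j1 \<in> U" "j2 \<in> U"
    using m_zero j by force+
  obtain t1 k1 where t1: "0 < t1" "\<forall>i\<in>U. 0 \<le> l i - t1 * m i" "k1 \<in> U" "l k1 - t1 * m k1 = 0"
    using \<open>j1 \<in> U\<close> j(1) by (rule ratio_test_step[OF finU lpos])
  obtain t2 k2 where t2: "0 < t2" "\<forall>i\<in>U. 0 \<le> l i - t2 * - m i" "k2 \<in> U" "l k2 - t2 * - m k2 = 0"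
    using \<open>j2 \<in> U\<close> j(2) by (rule ratio_test_step[OF finU lpos])
  note shift = barycentric_weights_shift[OF l m[unfolded U_def]]
  show thesis
  proof (rule that)
    show "barycentric_weights K v x (\<lambda>i. l i + - t1 * m i)" "{i. l i + - t1 * m i \<noteq> 0} \<subset> {i. l i \<noteq> 0}"
      using shift[of "- t1" k1] t1 by (simp_all add: U_def)
    show "barycentric_weights K v x (\<lambda>i. l i + t2 * m i)" "{i. l i + t2 * m i \<noteq> 0} \<subset> {i. l i \<noteq> 0}"
      using shift[of t2 k2] t2 by (simp_all add: U_def)
    show "0 \<le> t2 / (t1 + t2)" "t2 / (t1 + t2) \<le> 1"
      using t1 t2 by simp_all
    show "l = (\<lambda>i. t2 / (t1 + t2) * (l i + - t1 * m i) + (1 - t2 / (t1 + t2)) * (l i + t2 * m i))"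
    proof
      fix i
      have "t1 + t2 \<noteq> 0"
        using t1 t2 by simp
      then show "l i = t2 / (t1 + t2) * (l i + - t1 * m i) + (1 - t2 / (t1 + t2)) * (l i + t2 * m i)"
        by (simp add: divide_simps) algebra
    qed
  qed
qed

lemma simplex_mixture_if_barycentric_weights:
  fixes v :: "nat \<Rightarrow> real^'n"
  assumes inj: "inj_on v {..<K}" and dim: "aff_dim (v ` {..<K}) = int CARD('n)"
  shows "barycentric_weights K v x l \<Longrightarrow> simplex_mixture K v x l"
proof (induction "card {i. l i \<noteq> 0}" arbitrary: l rule: less_induct)
  case less
  show ?case
  proof (cases "affine_dependent (v ` {i. l i \<noteq> 0})")
    case False
    with inj dim less.prems show ?thesis
      by (rule simplex_mixture_if_affine_independent)
  next
    case True
    obtain l1 l2 a where l1: "barycentric_weights K v x l1" "{i. l1 i \<noteq> 0} \<subset> {i. l i \<noteq> 0}"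
      and l2: "barycentric_weights K v x l2" "{i. l2 i \<noteq> 0} \<subset> {i. l i \<noteq> 0}"
      and a: "0 \<le> a" "a \<le> 1" and l_eq: "l = (\<lambda>i. a * l1 i + (1 - a) * l2 i)"
      using barycentric_weights_split[OF inj less.prems True] by blast
    have "finite {i. l i \<noteq> 0}"
      using barycentric_weights_support[OF less.prems] finite_subset by blast
    then have "simplex_mixture K v x l1" "simplex_mixture K v x l2"
      using l1 l2 less.hyps psubset_card_mono by blast+
    then show ?thesis
      unfolding l_eq using a by (rule simplex_mixture_convex)
  qed
qed

theorem proposition1:
  fixes K :: nat and v :: "nat \<Rightarrow> real^'n" and P :: "(real^'n) set"
    and alpha :: "real^'n \<Rightarrow> nat \<Rightarrow> real"
  assumes "is_cage K v P"
    and "valid_gbc K v P alpha"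
    and "x \<in> P"
  shows "\<exists>w :: nat set \<Rightarrow> real.
           (\<forall>T\<in>simplices_containing K v x. w T \<ge> 0) \<and>
           (\<Sum>T\<in>simplices_containing K v x. w T) = 1 \<and>
           (\<forall>i<K. alpha x i = (\<Sum>T\<in>simplices_containing K v x. w T * cage_coords v T x i))"
proof -
  have inj: "inj_on v {..<K}" and dim: "aff_dim (v ` {..<K}) = int CARD('n)"
    using assms(1) by (auto simp: is_cage_def aff_dim_convex_hull)
  define l where "l i = (if i < K then alpha x i else 0)" for i
  have "barycentric_weights K v x l"
    using assms(2,3) by (auto simp: valid_gbc_def barycentric_weights_def l_def)
  then have "simplex_mixture K v x l"
    by (rule simplex_mixture_if_barycentric_weights[OF inj dim])
  then show ?thesis
    by (auto simp: simplex_mixture_def l_def)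
qed

end
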